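(* Let $K\in L^\infty(X\times_YX)$ and let $M\subseteq L^2(X|Y)$ be a countable conditional orthonormal set. Then $\sum_{f\in M}\|K*_Yf\|^2_{L^2(X)}<\infty$.
   Context: $(X,\mu)$ is a probability algebra ($\sigma$-complete Boolean algebra with strictly positive countably additive probability measure, not necessarily separable) and $Y\subseteq X$ a $\sigma$-complete subalgebra with $\nu=\mu|_Y$. $\tilde X,\tilde Y$ are the Stone spaces, $\tilde\mu,\tilde\nu$ the induced Baire–Radon probability measures, $\tilde\pi:\tilde X\to\tilde Y$ the induced continuous surjection; $L^p(X):=L^p(\tilde X,\mathrm{Baire}(\tilde X),\tilde\mu)$, $L^p(Y)\subseteq L^p(X)$ via $g\mapsto g\circ\tilde\pi$. Let $(\mu_y)_{y\in\tilde Y}$ be the canonical disintegration: Radon probability measures on $\tilde X$, $\mu_y$ concentrated on $\tilde\pi^{-1}(y)$, with $\int f\,(g\circ\tilde\pi)\,d\tilde\mu=\int(\int f\,d\mu_y)g\,d\tilde\nu$, so $\mathbb E(f|Y)(y)=\int fd\mu_y$. The relative product $X\times_YX$ is represented by $\tilde X\times\tilde X$ with measure $\int\mu_y\times\mu_y\,d\tilde\nu(y)$. $L^2(X|Y):=\{f\in L^0(X):\mathbb E(|f|^2|Y)<\infty\text{ a.e.}\}$, $\langle f,g\rangle_{X|Y}:=\mathbb E(f\bar g|Y)$, and $(K*_Yf)(x):=\int_{\tilde X}K(x,x')f(x')\,d\mu_{\tilde\pi(x)}(x')$. A set $M\subseteq L^2(X|Y)$ is conditional orthonormal if $\langle f,g\rangle_{X|Y}=0$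 for all distinct $f,g\in M$ and for each $f\in M$ there is $E\in Y$ with $\langle f,f\rangle_{X|Y}=1_E$. *)

theory Defs
  imports "HOL-Probability.Probability"
begin

text \<open>MX is the probability space representing X
(Stone space with its Baire sigma-algebra and induced measure), MY the measure space
representing Y (with nu), pi the factor map, and mu the disintegration kernel y to mu_y.\<close>

definition is_disintegration ::
  "'a measure \<Rightarrow> 'b measure \<Rightarrow> ('a \<Rightarrow> 'b) \<Rightarrow> ('b \<Rightarrow> 'a measure) \<Rightarrow> bool" where
  "is_disintegration MX MY \<pi> \<mu> \<longleftrightarrow>
     prob_space MX \<and>
     \<pi> \<in> measurable MX MY \<and>
     \<mu> \<in> measurable MY (prob_algebra MX) \<and>
     \<comment> \<open>mu_y is concentrated on the fibre over y\<close>
     (\<forall>y\<in>space MY. \<forall>A\<in>sets MX. \<pi> -` {y} \<inter> space MX \<subseteq> A \<longrightarrow> emeasure (\<mu> y) A = 1) \<and>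
     \<comment> \<open>disintegration identity\<close>
     (\<forall>f\<in>borel_measurable MX. \<forall>g\<in>borel_measurable MY.
        (\<integral>\<^sup>+ x. (f x :: ennreal) * g (\<pi> x) \<partial>MX) = (\<integral>\<^sup>+ y. (\<integral>\<^sup>+ x. f x \<partial>\<mu> y) * g y \<partial>MY))"

definition cond_inner ::
  "('b \<Rightarrow> 'a measure) \<Rightarrow> ('a \<Rightarrow> complex) \<Rightarrow> ('a \<Rightarrow> complex) \<Rightarrow> 'b \<Rightarrow> complex" where
  "cond_inner \<mu> f g y = (\<integral> x. f x * cnj (g x) \<partial>\<mu> y)"

definition cond_L2 :: "'a measure \<Rightarrow> 'b measure \<Rightarrow> ('b \<Rightarrow> 'a measure) \<Rightarrow> ('a \<Rightarrow> complex) set" where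
  "cond_L2 MX MY \<mu> = {f. f \<in> borel_measurable MX \<and>
      (AE y in MY. (\<integral>\<^sup>+ x. ennreal ((cmod (f x))\<^sup>2) \<partial>\<mu> y) < \<infinity>)}"

definition cond_orthonormal ::
  "'a measure \<Rightarrow> 'b measure \<Rightarrow> ('b \<Rightarrow> 'a measure) \<Rightarrow> ('a \<Rightarrow> complex) set \<Rightarrow> bool" where
  "cond_orthonormal MX MY \<mu> M \<longleftrightarrow>
     M \<subseteq> cond_L2 MX MY \<mu> \<and>
     (\<forall>f\<in>M. \<forall>g\<in>M. f \<noteq> g \<longrightarrow> (AE y in MY. cond_inner \<mu> f g y = 0)) \<and>
     (\<forall>f\<in>M. \<exists>E\<in>sets MY. AE y in MY. cond_inner \<mu> f f y = indicator E y)"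

definition rel_conv ::
  "('a \<Rightarrow> 'b) \<Rightarrow> ('b \<Rightarrow> 'a measure) \<Rightarrow> ('a \<times> 'a \<Rightarrow> complex) \<Rightarrow> ('a \<Rightarrow> complex) \<Rightarrow> 'a \<Rightarrow> complex" where
  "rel_conv \<pi> \<mu> K f x = (\<integral> x'. K (x, x') * f x' \<partial>\<mu> (\<pi> x))"

text \<open>K in L^infty of the relative product X x_Y X, whose measure is
the integral over nu of mu_y x mu_y: measurable and essentially bounded.\<close>
definition rel_Linfty ::
  "'a measure \<Rightarrow> 'b measure \<Rightarrow> ('b \<Rightarrow> 'a measure) \<Rightarrow> ('a \<times> 'a \<Rightarrow> complex) \<Rightarrow> bool" where
  "rel_Linfty MX MY \<mu> K \<longleftrightarrow> K \<in> borel_measurable (MX \<Otimes>\<^sub>M MX) \<and>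
     (\<exists>C::real. AE y in MY. AE p in (\<mu> y \<Otimes>\<^sub>M \<mu> y). cmod (K p) \<le> C)"

end

theory Submission
  imports Defs
begin

text \<open>On almost every fibre \<open>\<mu> y\<close> the functions of \<open>M\<close> form an orthonormal family in
\<open>L\<^sup>2(\<mu> y)\<close>, up to members of norm zero. For \<open>\<mu> y\<close>-almost every \<open>x\<close>, Bessel's inequality
for \<open>K(x,\<cdot>)\<close> against the conjugated family gives
\<open>\<Sum>\<^sub>f |(K *\<^sub>Y f)(x)|\<^sup>2 \<le> \<parallel>K(x,\<cdot>)\<parallel>\<^sup>2 \<le> C\<^sup>2\<close>, where \<open>C\<close> bounds \<open>|K|\<close>. Integrating first over
\<open>\<mu> y\<close> and then over \<open>\<nu>\<close> bounds every finite partial sum of \<open>\<Sum>\<^sub>f \<parallel>K *\<^sub>Y f\<parallel>\<^sup>2\<close> by \<open>C\<^sup>2\<close>.\<close>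

definition square_integrable :: "'a measure \<Rightarrow> ('a \<Rightarrow> complex) set" where
  "square_integrable N = {u. u \<in> borel_measurable N \<and> integrable N (\<lambda>x. (cmod (u x))\<^sup>2)}"

definition L2_inner :: "'a measure \<Rightarrow> ('a \<Rightarrow> complex) \<Rightarrow> ('a \<Rightarrow> complex) \<Rightarrow> complex" where
  "L2_inner N u v = (\<integral>x. u x * cnj (v x) \<partial>N)"

lemma borel_measurable_cnj [measurable]:
  "f \<in> borel_measurable M \<Longrightarrow> (\<lambda>x. cnj (f x :: complex)) \<in> borel_measurable M"
  by (rule borel_measurable_continuous_on[where f=cnj]) (intro continuous_intros)

lemma square_integrableD:
  assumes "u \<in> square_integrable N"
  shows "u \<in> borel_measurable N" "integrable N (\<lambda>x. (cmod (u x))\<^sup>2)"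
  using assms by (auto simp: square_integrable_def)

lemma integrable_mult_square_integrable:
  assumes u: "u \<in> square_integrable N" and v: "v \<in> square_integrable N"
  shows "integrable N (\<lambda>x. u x * v x)"
proof (rule Bochner_Integration.integrable_bound)
  show "integrable N (\<lambda>x. (cmod (u x))\<^sup>2 + (cmod (v x))\<^sup>2)"
    using u v by (auto simp: square_integrable_def)
  show "(\<lambda>x. u x * v x) \<in> borel_measurable N"
    using u v by (auto simp: square_integrable_def)
  have "cmod (u x) * cmod (v x) \<le> (cmod (u x))\<^sup>2 + (cmod (v x))\<^sup>2" for x
    using sum_squares_bound[of "cmod (u x)" "cmod (v x)"]
      mult_nonneg_nonneg[OF norm_ge_zero norm_ge_zero, of "u x" "v x"] by linarith
  then show "AE x in N. norm (u x * v x) \<le> norm ((cmod (u x))\<^sup>2 + (cmod (v x))\<^sup>2)"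
    by (simp add: norm_mult)
qed

lemma square_integrable_cnj:
  assumes "u \<in> square_integrable N"
  shows "(\<lambda>x. cnj (u x)) \<in> square_integrable N"
  using assms unfolding square_integrable_def by auto

lemma square_integrable_scale:
  assumes "u \<in> square_integrable N"
  shows "(\<lambda>x. c * u x) \<in> square_integrable N"
  using assms unfolding square_integrable_def by (auto simp: norm_mult power_mult_distrib)

lemma square_integrable_add:
  assumes u: "u \<in> square_integrable N" and v: "v \<in> square_integrable N"
  shows "(\<lambda>x. u x + v x) \<in> square_integrable N"
proof -
  have "(cmod (u x + v x))\<^sup>2 \<le> (cmod (u x) + cmod (v x))\<^sup>2" for x
    by (simp add: norm_triangle_ineq power_mono)
  also have "\<dots> x \<le> 2 * (cmod (u x))\<^sup>2 + 2 * (cmod (v x))\<^sup>2" for x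
    using sum_squares_bound[of "cmod (u x)" "cmod (v x)"] by (simp add: power2_sum)
  finally have bound: "(cmod (u x + v x))\<^sup>2 \<le> 2 * (cmod (u x))\<^sup>2 + 2 * (cmod (v x))\<^sup>2" for x .
  have meas: "(\<lambda>x. u x + v x) \<in> borel_measurable N"
    using u v by (auto simp: square_integrable_def)
  have "integrable N (\<lambda>x. (cmod (u x + v x))\<^sup>2)"
  proof (rule Bochner_Integration.integrable_bound)
    show "integrable N (\<lambda>x. 2 * (cmod (u x))\<^sup>2 + 2 * (cmod (v x))\<^sup>2)"
      using u v by (simp add: square_integrable_def)
    show "(\<lambda>x. (cmod (u x + v x))\<^sup>2) \<in> borel_measurable N"
      using meas by measurable
    show "AE x in N. norm ((cmod (u x + v x))\<^sup>2) \<le> norm (2 * (cmod (u x))\<^sup>2 + 2 * (cmod (v x))\<^sup>2)"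
      using bound by simp
  qed
  with meas show ?thesis
    unfolding square_integrable_def by simp
qed

lemma square_integrable_diff:
  assumes "u \<in> square_integrable N" "v \<in> square_integrable N"
  shows "(\<lambda>x. u x - v x) \<in> square_integrable N"
  using square_integrable_add[OF assms(1) square_integrable_scale[OF assms(2), of "-1"]] by simp

lemma square_integrable_sum:
  "(\<And>i. i \<in> I \<Longrightarrow> u i \<in> square_integrable N) \<Longrightarrow>
    (\<lambda>x. \<Sum>i\<in>I. c i * u i x) \<in> square_integrable N"
proof (induction I rule: infinite_finite_induct)
  case (insert i I)
  then show ?case
    by (simp add: square_integrable_add square_integrable_scale)
qed (simp_all add: square_integrable_def)

lemma L2_inner_cnj: "cnj (L2_inner N u v) = L2_inner N v u"
proof -
  have "(\<lambda>x. v x * cnj (u x)) = (\<lambda>x. cnj (u x * cnj (v x)))"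
    by (simp add: mult.commute)
  then show ?thesis
    unfolding L2_inner_def using Bochner_Integration.integral_cnj[of N "\<lambda>x. u x * cnj (v x)"] by simp
qed

lemma L2_inner_cnj_cnj: "L2_inner N (\<lambda>x. cnj (u x)) (\<lambda>x. cnj (v x)) = L2_inner N v u"
  unfolding L2_inner_def by (simp add: mult.commute)

lemma L2_inner_self: "L2_inner N u u = complex_of_real (\<integral>x. (cmod (u x))\<^sup>2 \<partial>N)"
proof -
  have "u x * cnj (u x) = complex_of_real ((cmod (u x))\<^sup>2)" for x
    by (simp only: complex_norm_square)
  then show ?thesis
    by (simp only: L2_inner_def integral_complex_of_real)
qed

lemma L2_inner_diff_left:
  assumes "u \<in> square_integrable N" "v \<in> square_integrable N" "w \<in> square_integrable N"
  shows "L2_inner N (\<lambda>x. u x - v x) w = L2_inner N u w - L2_inner N v w"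
  using assms unfolding L2_inner_def
  by (simp add: left_diff_distrib integrable_mult_square_integrable square_integrable_cnj)

lemma L2_inner_diff_right:
  assumes "u \<in> square_integrable N" "v \<in> square_integrable N" "w \<in> square_integrable N"
  shows "L2_inner N w (\<lambda>x. u x - v x) = L2_inner N w u - L2_inner N w v"
proof -
  have "L2_inner N w (\<lambda>x. u x - v x) = cnj (L2_inner N (\<lambda>x. u x - v x) w)"
    by (simp add: L2_inner_cnj)
  then show ?thesis
    by (simp add: L2_inner_diff_left[OF assms] L2_inner_cnj)
qed

lemma L2_inner_sum_left:
  assumes "\<And>i. i \<in> I \<Longrightarrow> u i \<in> square_integrable N" "v \<in> square_integrable N"
  shows "L2_inner N (\<lambda>x. \<Sum>i\<in>I. c i * u i x) v = (\<Sum>i\<in>I. c i * L2_inner N (u i) v)"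
proof -
  have "integrable N (\<lambda>x. c i * (u i x * cnj (v x)))" if "i \<in> I" for i
    using assms that by (simp add: integrable_mult_square_integrable square_integrable_cnj)
  then show ?thesis
    unfolding L2_inner_def sum_distrib_right
    by (simp add: Bochner_Integration.integral_sum mult.assoc)
qed

lemma L2_inner_sum_right:
  assumes "\<And>i. i \<in> I \<Longrightarrow> u i \<in> square_integrable N" "v \<in> square_integrable N"
  shows "L2_inner N v (\<lambda>x. \<Sum>i\<in>I. c i * u i x) = (\<Sum>i\<in>I. cnj (c i) * L2_inner N v (u i))"
proof -
  have "L2_inner N v (\<lambda>x. \<Sum>i\<in>I. c i * u i x) = cnj (\<Sum>i\<in>I. c i * L2_inner N (u i) v)"
    by (simp add: L2_inner_cnj flip: L2_inner_sum_left[OF assms])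
  then show ?thesis
    by (simp add: L2_inner_cnj)
qed

lemma L2_inner_orthogonal_if_null:
  assumes "u \<in> square_integrable N" "L2_inner N u u = 0"
  shows "L2_inner N v u = 0"
proof -
  have "(\<integral>x. (cmod (u x))\<^sup>2 \<partial>N) = 0"
    using assms(2) by (simp add: L2_inner_self)
  then have "AE x in N. u x = 0"
    using integral_nonneg_eq_0_iff_AE[OF square_integrableD(2)[OF assms(1)]] by simp
  then have "AE x in N. v x * cnj (u x) = 0"
    by eventually_elim simp
  then show ?thesis
    unfolding L2_inner_def by (rule integral_eq_zero_AE)
qed

lemma bessel_inequality:
  assumes I: "finite I"
    and k: "k \<in> square_integrable N"
    and e: "\<And>i. i \<in> I \<Longrightarrow> e i \<in> square_integrable N"
    and orth: "\<And>i j. i \<in> I \<Longrightarrow> j \<in> I \<Longrightarrow> i \<noteq> j \<Longrightarrow> L2_inner N (e i) (e j) = 0"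
    and normal: "\<And>i. i \<in> I \<Longrightarrow> L2_inner N (e i) (e i) \<in> {0, 1}"
  shows "(\<Sum>i\<in>I. (cmod (L2_inner N k (e i)))\<^sup>2) \<le> (\<integral>x. (cmod (k x))\<^sup>2 \<partial>N)"
proof -
  define c where "c i = L2_inner N k (e i)" for i
  define h where "h = (\<lambda>x. \<Sum>i\<in>I. c i * e i x)"
  define S where "S = (\<Sum>i\<in>I. (cmod (c i))\<^sup>2)"
  have h: "h \<in> square_integrable N"
    unfolding h_def using e by (rule square_integrable_sum)
  have coeff: "L2_inner N h (e j) = c j" if j: "j \<in> I" for j
  proof -
    have "L2_inner N h (e j) = (\<Sum>i\<in>I. c i * L2_inner N (e i) (e j))"
      unfolding h_def using e j by (intro L2_inner_sum_left) auto
    also have "\<dots> = c j * L2_inner N (e j) (e j)"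
      using orth j I by (subst sum.remove[of I j]) (auto intro: sum.neutral)
    also have "\<dots> = c j"
      using normal[OF j] L2_inner_orthogonal_if_null[OF e[OF j]] unfolding c_def by auto
    finally show ?thesis .
  qed
  have sum_coeff: "(\<Sum>i\<in>I. cnj (c i) * c i) = complex_of_real S"
    by (simp only: S_def of_real_sum complex_norm_square mult.commute)
  have kh: "L2_inner N k h = complex_of_real S"
    unfolding h_def using e k by (simp add: L2_inner_sum_right c_def[symmetric] sum_coeff)
  have hk: "L2_inner N h k = complex_of_real S"
    using kh L2_inner_cnj[of N k h] by simp
  have "L2_inner N h h = L2_inner N h (\<lambda>x. \<Sum>i\<in>I. c i * e i x)"
    by (simp only: h_def)
  also have "\<dots> = (\<Sum>i\<in>I. cnj (c i) * c i)"
    using e h by (simp add: L2_inner_sum_right coeff)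
  finally have hh: "L2_inner N h h = complex_of_real S"
    by (simp only: sum_coeff)
  have "L2_inner N (\<lambda>x. k x - h x) (\<lambda>x. k x - h x) = L2_inner N k k - complex_of_real S"
    using k h square_integrable_diff[OF k h]
    by (simp add: L2_inner_diff_left L2_inner_diff_right kh hk hh)
  then have "(\<integral>x. (cmod (k x - h x))\<^sup>2 \<partial>N) = (\<integral>x. (cmod (k x))\<^sup>2 \<partial>N) - S"
    unfolding L2_inner_self by (simp flip: of_real_diff)
  moreover have "0 \<le> (\<integral>x. (cmod (k x - h x))\<^sup>2 \<partial>N)"
    by simp
  ultimately show ?thesis
    unfolding S_def c_def by simp
qed

lemma square_integrable_bounded:
  assumes "finite_measure N" "u \<in> borel_measurable N" "AE x in N. cmod (u x) \<le> C"
  shows "u \<in> square_integrable N"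
proof -
  interpret finite_measure N by fact
  have "AE x in N. norm ((cmod (u x))\<^sup>2) \<le> C\<^sup>2"
    using assms(3) by eventually_elim (simp add: power_mono)
  then have "integrable N (\<lambda>x. (cmod (u x))\<^sup>2)"
    using assms(2) by (intro integrable_const_bound[where B="C\<^sup>2"]) auto
  with assms(2) show ?thesis
    unfolding square_integrable_def by simp
qed

lemma bessel_inequality_kernel:
  assumes N: "prob_space N"
    and K: "K \<in> borel_measurable (N \<Otimes>\<^sub>M N)"
    and bound: "AE p in N \<Otimes>\<^sub>M N. cmod (K p) \<le> C"
    and F: "finite F" "F \<subseteq> square_integrable N"
    and orth: "\<And>f g. f \<in> F \<Longrightarrow> g \<in> F \<Longrightarrow> f \<noteq> g \<Longrightarrow> L2_inner N f g = 0"
    and normal: "\<And>f. f \<in> F \<Longrightarrow> L2_inner N f f \<in> {0, 1}"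
  shows "AE x in N. (\<Sum>f\<in>F. (cmod (\<integral>x'. K (x, x') * f x' \<partial>N))\<^sup>2) \<le> C\<^sup>2"
proof -
  interpret prob_space N by (fact N)
  interpret pair_sigma_finite N N ..
  have "AE x in N. AE x' in N. cmod (K (x, x')) \<le> C"
    using AE_pair[OF bound] by simp
  then show ?thesis
    using AE_space
  proof eventually_elim
    case (elim x)
    define k where "k x' = K (x, x')" for x'
    have "k \<in> borel_measurable N"
      unfolding k_def using K elim(2) by measurable
    then have k: "k \<in> square_integrable N"
      using elim(1) unfolding k_def by (intro square_integrable_bounded) unfold_locales
    txt \<open>The integral against \<open>f\<close> is the coefficient along \<open>cnj \<circ> f\<close>, and conjugating the
      family preserves its orthonormality relations.\<close>
    have "(\<Sum>f\<in>F. (cmod (\<integral>x'. K (x, x') * f x' \<partial>N))\<^sup>2)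
        = (\<Sum>f\<in>F. (cmod (L2_inner N k (\<lambda>x'. cnj (f x'))))\<^sup>2)"
      by (simp add: L2_inner_def k_def)
    also have "\<dots> \<le> (\<integral>x'. (cmod (k x'))\<^sup>2 \<partial>N)"
    proof (rule bessel_inequality[OF F(1) k])
      show "(\<lambda>x'. cnj (f x')) \<in> square_integrable N" if "f \<in> F" for f
        using F(2) that by (intro square_integrable_cnj) auto
    qed (use normal in \<open>simp_all add: L2_inner_cnj_cnj orth\<close>)
    also have "\<dots> \<le> (\<integral>x'. C\<^sup>2 \<partial>N)"
      using elim(1) square_integrableD(2)[OF k]
      by (intro integral_mono_AE) (auto simp: k_def power_mono elim: eventually_mono)
    also have "\<dots> = C\<^sup>2"
      by (simp add: prob_space)
    finally show ?case .
  qed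
qed

lemma integral_measurable_subprob_algebra2:
  fixes f :: "_ \<Rightarrow> _ \<Rightarrow> 'c::{banach, second_countable_topology}"
  assumes f[measurable]: "(\<lambda>(x, y). f x y) \<in> borel_measurable (M \<Otimes>\<^sub>M N)"
  assumes L[measurable]: "L \<in> measurable M (subprob_algebra N)"
  shows "(\<lambda>x. integral\<^sup>L (L x) (f x)) \<in> borel_measurable M"
proof -
  note integral_measurable_subprob_algebra[measurable]
  note measurable_distr2[measurable]
  have "(\<lambda>x. integral\<^sup>L (distr (L x) (M \<Otimes>\<^sub>M N) (\<lambda>y. (x, y))) (\<lambda>(x, y). f x y)) \<in> borel_measurable M"
    by measurable
  then show ?thesis
    by (rule measurable_cong[THEN iffD1, rotated]) (simp add: integral_distr)
qed

locale disintegration =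
  fixes MX :: "'a measure" and MY :: "'b measure" and \<pi> :: "'a \<Rightarrow> 'b" and \<mu> :: "'b \<Rightarrow> 'a measure"
  assumes is_disintegration: "is_disintegration MX MY \<pi> \<mu>"
begin

sublocale prob_space MX
  using is_disintegration by (simp add: is_disintegration_def)

lemma measurable_factor_map [measurable]: "\<pi> \<in> MX \<rightarrow>\<^sub>M MY"
  using is_disintegration by (simp add: is_disintegration_def)

lemma measurable_fibres_prob_algebra: "\<mu> \<in> MY \<rightarrow>\<^sub>M prob_algebra MX"
  using is_disintegration by (simp add: is_disintegration_def)

lemma measurable_fibres [measurable]: "\<mu> \<in> MY \<rightarrow>\<^sub>M subprob_algebra MX"
  using measurable_fibres_prob_algebra by (rule measurable_prob_algebraD)

lemma nn_integral_disintegration: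
  assumes "f \<in> borel_measurable MX" "g \<in> borel_measurable MY"
  shows "(\<integral>\<^sup>+ x. f x * g (\<pi> x) \<partial>MX) = (\<integral>\<^sup>+ y. (\<integral>\<^sup>+ x. f x \<partial>\<mu> y) * g y \<partial>MY)"
  using is_disintegration assms by (simp add: is_disintegration_def)

context
  fixes y assumes y: "y \<in> space MY"
begin

lemma prob_space_fibre: "prob_space (\<mu> y)"
  using measurable_space[OF measurable_fibres_prob_algebra y] by (simp add: space_prob_algebra)

lemma sets_fibre: "sets (\<mu> y) = sets MX"
  using measurable_space[OF measurable_fibres_prob_algebra y] by (simp add: space_prob_algebra)

lemma space_fibre: "space (\<mu> y) = space MX"
  using sets_fibre by (rule sets_eq_imp_space_eq)

end

lemma space_MY_not_empty: "space MY \<noteq> {}"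
  using measurable_space[OF measurable_factor_map] not_empty by blast

lemma emeasure_space_MY: "emeasure MY (space MY) = 1"
proof -
  have "1 = (\<integral>\<^sup>+ x. 1 * 1 \<partial>MX)"
    by (simp add: emeasure_space_1)
  also have "\<dots> = (\<integral>\<^sup>+ y. (\<integral>\<^sup>+ x. 1 \<partial>\<mu> y) * 1 \<partial>MY)"
    by (rule nn_integral_disintegration) auto
  also have "\<dots> = (\<integral>\<^sup>+ y. 1 \<partial>MY)"
    by (intro nn_integral_cong) (simp add: prob_space.emeasure_space_1[OF prob_space_fibre])
  finally show ?thesis
    by simp
qed

lemma measurable_distr_fibres_graph:
  "(\<lambda>y. distr (\<mu> y) (MX \<Otimes>\<^sub>M MY) (\<lambda>x. (x, y))) \<in> MY \<rightarrow>\<^sub>M subprob_algebra (MX \<Otimes>\<^sub>M MY)"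
  by (rule measurable_distr2[OF _ measurable_fibres]) measurable

text \<open>The disintegration identity is the equality of these two measures on rectangles.\<close>

lemma distr_graph_eq_bind:
  "distr MX (MX \<Otimes>\<^sub>M MY) (\<lambda>x. (x, \<pi> x)) = MY \<bind> (\<lambda>y. distr (\<mu> y) (MX \<Otimes>\<^sub>M MY) (\<lambda>x. (x, y)))"
  (is "?A = MY \<bind> ?k")
proof (rule measure_eqI_generator_eq[OF Int_stable_pair_measure_generator[of MX MY]])
  let ?E = "{a \<times> b |a b. a \<in> sets MX \<and> b \<in> sets MY}"
  show "?E \<subseteq> Pow (space MX \<times> space MY)"
    by (auto dest: sets.sets_into_space)
  show "sets ?A = sigma_sets (space MX \<times> space MY) ?E"
    by (simp add: sets_pair_measure)
  show "sets (MY \<bind> ?k) = sigma_sets (space MX \<times> space MY) ?E"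
    by (subst sets_bind[where N="MX \<Otimes>\<^sub>M MY", OF _ space_MY_not_empty]) (simp_all add: sets_pair_measure)
  show "range (\<lambda>i. space MX \<times> space MY) \<subseteq> ?E" "(\<Union>i. space MX \<times> space MY) = space MX \<times> space MY"
    by auto
  show "emeasure ?A (space MX \<times> space MY) \<noteq> \<infinity>"
    by (subst emeasure_distr) (auto simp: space_pair_measure)
  fix X assume "X \<in> ?E"
  then obtain a b where X: "X = a \<times> b" and [measurable]: "a \<in> sets MX" "b \<in> sets MY"
    by auto
  have "emeasure ?A X = (\<integral>\<^sup>+ x. indicator a x * indicator b (\<pi> x) \<partial>MX)"
    unfolding X by (subst emeasure_distr) (auto intro!: nn_integral_cong simp: indicator_def simp flip: nn_integral_indicator)
  also have "\<dots> = (\<integral>\<^sup>+ y. emeasure (\<mu> y) a * indicator b y \<partial>MY)"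
    by (subst nn_integral_disintegration) (auto intro!: nn_integral_cong simp: sets_fibre)
  also have "\<dots> = (\<integral>\<^sup>+ y. emeasure (?k y) X \<partial>MY)"
    unfolding X using sets.sets_into_space
    by (intro nn_integral_cong, subst emeasure_distr)
      (auto simp: sets_fibre space_fibre measurable_def space_pair_measure indicator_def
        intro!: arg_cong2[where f=emeasure])
  also have "\<dots> = emeasure (MY \<bind> ?k) X"
    using X by (intro emeasure_bind[symmetric, OF space_MY_not_empty measurable_distr_fibres_graph]) auto
  finally show "emeasure ?A X = emeasure (MY \<bind> ?k) X" .
qed

lemma nn_integral_graph:
  assumes [measurable]: "G \<in> borel_measurable (MX \<Otimes>\<^sub>M MY)"
  shows "(\<integral>\<^sup>+ x. G (x, \<pi> x) \<partial>MX) = (\<integral>\<^sup>+ y. \<integral>\<^sup>+ x. G (x, y) \<partial>\<mu> y \<partial>MY)"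
proof -
  have "(\<integral>\<^sup>+ x. G (x, \<pi> x) \<partial>MX) = (\<integral>\<^sup>+ p. G p \<partial>distr MX (MX \<Otimes>\<^sub>M MY) (\<lambda>x. (x, \<pi> x)))"
    by (simp add: nn_integral_distr)
  also have "\<dots> = (\<integral>\<^sup>+ y. \<integral>\<^sup>+ p. G p \<partial>distr (\<mu> y) (MX \<Otimes>\<^sub>M MY) (\<lambda>x. (x, y)) \<partial>MY)"
    unfolding distr_graph_eq_bind by (rule nn_integral_bind[OF _ measurable_distr_fibres_graph]) measurable
  also have "\<dots> = (\<integral>\<^sup>+ y. \<integral>\<^sup>+ x. G (x, y) \<partial>\<mu> y \<partial>MY)"
    by (intro nn_integral_cong, subst nn_integral_distr)
      (auto simp: measurable_cong_sets[OF sets_fibre refl])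
  finally show ?thesis .
qed

lemma AE_square_integrable_fibre:
  assumes "f \<in> cond_L2 MX MY \<mu>"
  shows "AE y in MY. f \<in> square_integrable (\<mu> y)"
proof -
  have f: "f \<in> borel_measurable MX"
    and L2: "AE y in MY. (\<integral>\<^sup>+ x. ennreal ((cmod (f x))\<^sup>2) \<partial>\<mu> y) < \<infinity>"
    using assms by (auto simp: cond_L2_def)
  show ?thesis
    using L2 AE_space
  proof eventually_elim
    case (elim y)
    then have "f \<in> borel_measurable (\<mu> y)"
      using f by (simp add: measurable_cong_sets[OF sets_fibre refl])
    with elim show ?case
      by (simp add: square_integrable_def integrable_iff_bounded)
  qed
qed

lemma AE_cond_orthonormal_fibres:
  assumes M: "cond_orthonormal MX MY \<mu> M" and F: "finite F" "F \<subseteq> M"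
  shows "AE y in MY. F \<subseteq> square_integrable (\<mu> y) \<and>
    (\<forall>f\<in>F. \<forall>g\<in>F. f \<noteq> g \<longrightarrow> L2_inner (\<mu> y) f g = 0) \<and>
    (\<forall>f\<in>F. L2_inner (\<mu> y) f f \<in> {0, 1})"
proof -
  have "cond_inner \<mu> f g y = L2_inner (\<mu> y) f g" for f g y
    by (simp add: cond_inner_def L2_inner_def)
  moreover have "AE y in MY. \<forall>f\<in>F. f \<in> square_integrable (\<mu> y)"
    using M F by (intro AE_finite_allI AE_square_integrable_fibre) (auto simp: cond_orthonormal_def)
  moreover have "AE y in MY. \<forall>f\<in>F. \<forall>g\<in>F. f \<noteq> g \<longrightarrow> cond_inner \<mu> f g y = 0"
  proof (intro AE_finite_allI[OF F(1)])
    fix f g assume "f \<in> F" "g \<in> F"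
    show "AE y in MY. f \<noteq> g \<longrightarrow> cond_inner \<mu> f g y = 0"
    proof (cases "f = g")
      case False
      then have "AE y in MY. cond_inner \<mu> f g y = 0"
        using M F(2) \<open>f \<in> F\<close> \<open>g \<in> F\<close> unfolding cond_orthonormal_def by blast
      then show ?thesis
        by (rule eventually_mono) simp
    qed simp
  qed
  moreover have "AE y in MY. \<forall>f\<in>F. cond_inner \<mu> f f y \<in> {0, 1}"
  proof (intro AE_finite_allI[OF F(1)])
    fix f assume "f \<in> F"
    then obtain E where "AE y in MY. cond_inner \<mu> f f y = indicator E y"
      using M F(2) unfolding cond_orthonormal_def by blast
    then show "AE y in MY. cond_inner \<mu> f f y \<in> {0, 1}"
      by eventually_elim (simp add: indicator_def)
  qed
  ultimately show ?thesis
    by (auto elim: eventually_mono)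
qed

lemma measurable_rel_conv_fibrewise:
  fixes K :: "'a \<times> 'a \<Rightarrow> complex" and f :: "'a \<Rightarrow> complex"
  assumes [measurable]: "K \<in> borel_measurable (MX \<Otimes>\<^sub>M MX)" "f \<in> borel_measurable MX"
  shows "(\<lambda>p. \<integral>x'. K (fst p, x') * f x' \<partial>\<mu> (snd p)) \<in> borel_measurable (MX \<Otimes>\<^sub>M MY)"
  by (rule integral_measurable_subprob_algebra2[where f="\<lambda>p x'. K (fst p, x') * f x'" and N=MX])
    measurable

lemma AE_nn_integral_fibre_le:
  fixes K :: "'a \<times> 'a \<Rightarrow> complex"
  assumes K: "K \<in> borel_measurable (MX \<Otimes>\<^sub>M MX)"
    and bound: "AE y in MY. AE p in \<mu> y \<Otimes>\<^sub>M \<mu> y. cmod (K p) \<le> C"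
    and M: "cond_orthonormal MX MY \<mu> M" and F: "finite F" "F \<subseteq> M"
  shows "AE y in MY. (\<integral>\<^sup>+ x. (\<Sum>f\<in>F. ennreal ((cmod (\<integral>x'. K (x, x') * f x' \<partial>\<mu> y))\<^sup>2)) \<partial>\<mu> y)
    \<le> ennreal (C\<^sup>2)"
  using AE_space bound AE_cond_orthonormal_fibres[OF M F]
proof eventually_elim
  case (elim y)
  interpret fibre: prob_space "\<mu> y"
    using elim(1) by (rule prob_space_fibre)
  have "K \<in> borel_measurable (\<mu> y \<Otimes>\<^sub>M \<mu> y)"
    using K by (simp add: measurable_cong_sets[OF sets_pair_measure_cong[OF sets_fibre sets_fibre] refl] elim(1))
  then have "AE x in \<mu> y. (\<Sum>f\<in>F. (cmod (\<integral>x'. K (x, x') * f x' \<partial>\<mu> y))\<^sup>2) \<le> C\<^sup>2"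
    using elim(2,3) F(1) by (intro bessel_inequality_kernel) (auto intro: fibre.prob_space_axioms)
  then have "AE x in \<mu> y. (\<Sum>f\<in>F. ennreal ((cmod (\<integral>x'. K (x, x') * f x' \<partial>\<mu> y))\<^sup>2)) \<le> ennreal (C\<^sup>2)"
    by eventually_elim (simp add: sum_ennreal ennreal_leI)
  then have "(\<integral>\<^sup>+ x. (\<Sum>f\<in>F. ennreal ((cmod (\<integral>x'. K (x, x') * f x' \<partial>\<mu> y))\<^sup>2)) \<partial>\<mu> y)
      \<le> (\<integral>\<^sup>+ x. ennreal (C\<^sup>2) \<partial>\<mu> y)"
    by (rule nn_integral_mono_AE)
  then show ?case
    by (simp add: fibre.emeasure_space_1)
qed

lemma sum_nn_integral_rel_conv_le:
  fixes K :: "'a \<times> 'a \<Rightarrow> complex"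
  assumes K: "K \<in> borel_measurable (MX \<Otimes>\<^sub>M MX)"
    and bound: "AE y in MY. AE p in \<mu> y \<Otimes>\<^sub>M \<mu> y. cmod (K p) \<le> C"
    and M: "cond_orthonormal MX MY \<mu> M" and F: "finite F" "F \<subseteq> M"
  shows "(\<Sum>f\<in>F. \<integral>\<^sup>+ x. ennreal ((cmod (rel_conv \<pi> \<mu> K f x))\<^sup>2) \<partial>MX) \<le> ennreal (C\<^sup>2)"
proof -
  have conv [measurable]:
    "(\<lambda>p. \<integral>x'. K (fst p, x') * f x' \<partial>\<mu> (snd p)) \<in> borel_measurable (MX \<Otimes>\<^sub>M MY)"
    if "f \<in> F" for f
    using M F(2) that by (intro measurable_rel_conv_fibrewise K) (auto simp: cond_orthonormal_def cond_L2_def)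
  define G where "G p = (\<Sum>f\<in>F. ennreal ((cmod (\<integral>x'. K (fst p, x') * f x' \<partial>\<mu> (snd p)))\<^sup>2))" for p
  have "(\<Sum>f\<in>F. \<integral>\<^sup>+ x. ennreal ((cmod (rel_conv \<pi> \<mu> K f x))\<^sup>2) \<partial>MX) = (\<integral>\<^sup>+ x. G (x, \<pi> x) \<partial>MX)"
  proof (simp only: G_def rel_conv_def fst_conv snd_conv, rule nn_integral_sum[symmetric])
    fix f assume "f \<in> F"
    then have "(\<lambda>x. ennreal ((cmod (\<integral>x'. K (fst (x, \<pi> x), x') * f x' \<partial>\<mu> (snd (x, \<pi> x))))\<^sup>2))
        \<in> borel_measurable MX"
      by measurable
    then show "(\<lambda>x. ennreal ((cmod (\<integral>x'. K (x, x') * f x' \<partial>\<mu> (\<pi> x)))\<^sup>2)) \<in> borel_measurable MX"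
      by simp
  qed
  also have "\<dots> = (\<integral>\<^sup>+ y. \<integral>\<^sup>+ x. G (x, y) \<partial>\<mu> y \<partial>MY)"
    by (rule nn_integral_graph) (use conv in \<open>simp add: G_def\<close>)
  also have "\<dots> \<le> (\<integral>\<^sup>+ y. ennreal (C\<^sup>2) \<partial>MY)"
    using AE_nn_integral_fibre_le[OF K bound M F] by (intro nn_integral_mono_AE) (simp add: G_def)
  also have "\<dots> = ennreal (C\<^sup>2)"
    by (simp add: emeasure_space_MY)
  finally show ?thesis .
qed

end

theorem lemmaA2:
  fixes MX :: "'a measure" and MY :: "'b measure" and \<pi> :: "'a \<Rightarrow> 'b"
    and \<mu> :: "'b \<Rightarrow> 'a measure" and K :: "'a \<times> 'a \<Rightarrow> complex"
    and M :: "('a \<Rightarrow> complex) set"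
  assumes "is_disintegration MX MY \<pi> \<mu>"
    and "rel_Linfty MX MY \<mu> K"
    and "countable M"
    and "cond_orthonormal MX MY \<mu> M"
  shows "(\<Sum>\<^sub>\<infinity> f\<in>M. \<integral>\<^sup>+ x. ennreal ((cmod (rel_conv \<pi> \<mu> K f x))\<^sup>2) \<partial>MX) < \<infinity>"
proof -
  interpret disintegration MX MY \<pi> \<mu>
    using assms(1) by unfold_locales
  txt \<open>The bound holds for every conditional orthonormal set.\<close>
  obtain C where K: "K \<in> borel_measurable (MX \<Otimes>\<^sub>M MX)"
    and bound: "AE y in MY. AE p in \<mu> y \<Otimes>\<^sub>M \<mu> y. cmod (K p) \<le> C"
    using assms(2) unfolding rel_Linfty_def by blast
  have "(\<Sum>\<^sub>\<infinity> f\<in>M. \<integral>\<^sup>+ x. ennreal ((cmod (rel_conv \<pi> \<mu> K f x))\<^sup>2) \<partial>MX) \<le> ennreal (C\<^sup>2)"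
    using sum_nn_integral_rel_conv_le[OF K bound assms(4)]
    by (intro infsum_le_finite_sums nonneg_summable_on_complete) auto
  then show ?thesis
    unfolding infinity_ennreal_def using ennreal_less_top by (rule order.strict_trans1)
qed

end
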